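(* Let $(M^4,g,I,J)$ be a nondegenerate generalized Kähler structure with angle function $p$ and Lee form $\theta=\theta_I$. Then $$\theta=\frac{1}{2(p^2-1)}\,dp\circ[I,J].$$
   Context: Generalized Kähler (GK) structure: $I,J$ are integrable complex structures and $g$ is Hermitian for both. With $\omega_I(X,Y)=g(X,IY)$ and $\omega_J(X,Y)=g(X,JY)$, one has $d^c_I\omega_I=H=-d^c_J\omega_J$ and $dH=0$, where $d^c=\sqrt{-1}(\bar\partial-\partial)$. The Lee form $\theta=\theta_I$ is defined by $d\omega_I=\theta\wedge\omega_I$. The angle function is $p=\frac14\operatorname{tr}(IJ)$. Nondegenerate means $g^{-1}[I,J]$ is nondegenerate; in dimension $4$ this is equivalent to $I,J$ inducing the same orientation with $|p|<1$. For a $1$-form $\alpha$ and an endomorphism $A$, $\alpha\circ A$ denotes $X\mapsto\alpha(AX)$. *)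

theory Defs
  imports "HOL-Analysis.Analysis"
begin

text \<open>Local (coordinate) model: the 4-manifold is an open set U of real^4.
 Tangent vectors are elements of real^4; endomorphism fields are matrix-valued
 functions; a k-form is a function of the base point and k tangent vectors;
 a 1-form theta is represented by the vector field with theta(X) = theta x \<bullet> X.\<close>

type_synonym pt = "real^4"
type_synonym endo_field = "pt \<Rightarrow> real^4^4"
type_synonym form2 = "pt \<Rightarrow> real^4 \<Rightarrow> real^4 \<Rightarrow> real"
type_synonym form3 = "pt \<Rightarrow> real^4 \<Rightarrow> real^4 \<Rightarrow> real^4 \<Rightarrow> real"

fun Ck :: "nat \<Rightarrow> pt set \<Rightarrow> (pt \<Rightarrow> real) \<Rightarrow> bool" where
  "Ck 0 U f = continuous_on U f"
| "Ck (Suc k) U f = (f differentiable_on U \<and>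
      (\<forall>v. Ck k U (\<lambda>x. frechet_derivative f (at x) v)))"

definition smooth_on :: "pt set \<Rightarrow> (pt \<Rightarrow> real) \<Rightarrow> bool" where
  "smooth_on U f \<longleftrightarrow> (\<forall>k. Ck k U f)"

definition smooth_endo :: "pt set \<Rightarrow> endo_field \<Rightarrow> bool" where
  "smooth_endo U A \<longleftrightarrow> (\<forall>i j. smooth_on U (\<lambda>x. A x $ i $ j))"

definition dd :: "(pt \<Rightarrow> 'b::real_normed_vector) \<Rightarrow> pt \<Rightarrow> real^4 \<Rightarrow> 'b" where
  "dd f x v = frechet_derivative f (at x) v"

text \<open>Exterior derivative (evaluated on constant coordinate vector fields).\<close>
definition d2 :: "form2 \<Rightarrow> form3" where
  "d2 \<omega> x X Y Z = dd (\<lambda>y. \<omega> y Y Z) x X + dd (\<lambda>y. \<omega> y Z X) x Y + dd (\<lambda>y. \<omega> y X Y) x Z"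

definition d3 :: "form3 \<Rightarrow> pt \<Rightarrow> real^4 \<Rightarrow> real^4 \<Rightarrow> real^4 \<Rightarrow> real^4 \<Rightarrow> real" where
  "d3 H x W X Y Z = dd (\<lambda>y. H y X Y Z) x W - dd (\<lambda>y. H y W Y Z) x X
                  + dd (\<lambda>y. H y W X Z) x Y - dd (\<lambda>y. H y W X Y) x Z"

definition wedge12 :: "(pt \<Rightarrow> real^4) \<Rightarrow> form2 \<Rightarrow> form3" where
  "wedge12 \<theta> \<omega> x X Y Z = (\<theta> x \<bullet> X) * \<omega> x Y Z + (\<theta> x \<bullet> Y) * \<omega> x Z X + (\<theta> x \<bullet> Z) * \<omega> x X Y"

definition act2 :: "endo_field \<Rightarrow> form2 \<Rightarrow> form2" where
  "act2 A \<omega> x X Y = \<omega> x (A x *v X) (A x *v Y)"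

definition act3 :: "endo_field \<Rightarrow> form3 \<Rightarrow> form3" where
  "act3 A H x X Y Z = H x (A x *v X) (A x *v Y) (A x *v Z)"

text \<open>d^c = sqrt(-1)(dbar - partial) = I^{-1} d I on forms.\<close>
definition dc :: "endo_field \<Rightarrow> form2 \<Rightarrow> form3" where
  "dc I \<omega> = act3 (\<lambda>x. matrix_inv (I x)) (d2 (act2 I \<omega>))"

definition lie_bracket :: "(pt \<Rightarrow> real^4) \<Rightarrow> (pt \<Rightarrow> real^4) \<Rightarrow> pt \<Rightarrow> real^4" where
  "lie_bracket V W x = dd W x (V x) - dd V x (W x)"

definition nijenhuis :: "endo_field \<Rightarrow> (pt \<Rightarrow> real^4) \<Rightarrow> (pt \<Rightarrow> real^4) \<Rightarrow> pt \<Rightarrow> real^4" where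
  "nijenhuis I V W x =
     lie_bracket (\<lambda>y. I y *v V y) (\<lambda>y. I y *v W y) x
     - I x *v lie_bracket (\<lambda>y. I y *v V y) W x
     - I x *v lie_bracket V (\<lambda>y. I y *v W y) x
     - lie_bracket V W x"

definition integrable_cs :: "pt set \<Rightarrow> endo_field \<Rightarrow> bool" where
  "integrable_cs U I \<longleftrightarrow> smooth_endo U I \<and>
     (\<forall>x\<in>U. I x ** I x = - mat 1 \<and>
        (\<forall>X Y. nijenhuis I (\<lambda>_. X) (\<lambda>_. Y) x = 0))"

definition gf :: "endo_field \<Rightarrow> pt \<Rightarrow> real^4 \<Rightarrow> real^4 \<Rightarrow> real" where
  "gf g x X Y = X \<bullet> (g x *v Y)"

definition riem_metric :: "pt set \<Rightarrow> endo_field \<Rightarrow> bool" where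
  "riem_metric U g \<longleftrightarrow> smooth_endo U g \<and>
     (\<forall>x\<in>U. transpose (g x) = g x \<and> (\<forall>X. X \<noteq> 0 \<longrightarrow> gf g x X X > 0))"

definition hermitian :: "pt set \<Rightarrow> endo_field \<Rightarrow> endo_field \<Rightarrow> bool" where
  "hermitian U g I \<longleftrightarrow> (\<forall>x\<in>U. \<forall>X Y. gf g x (I x *v X) (I x *v Y) = gf g x X Y)"

definition fund_form :: "endo_field \<Rightarrow> endo_field \<Rightarrow> form2" where
  "fund_form g I x X Y = gf g x X (I x *v Y)"

definition gen_kahler :: "pt set \<Rightarrow> endo_field \<Rightarrow> endo_field \<Rightarrow> endo_field \<Rightarrow> bool" where
  "gen_kahler U g I J \<longleftrightarrow> open U \<and> riem_metric U g \<and>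
     integrable_cs U I \<and> integrable_cs U J \<and> hermitian U g I \<and> hermitian U g J \<and>
     (let H = dc I (fund_form g I) in
        (\<forall>x\<in>U. \<forall>X Y Z. H x X Y Z = - dc J (fund_form g J) x X Y Z) \<and>
        (\<forall>x\<in>U. \<forall>W X Y Z. d3 H x W X Y Z = 0))"

definition commutator :: "endo_field \<Rightarrow> endo_field \<Rightarrow> endo_field" where
  "commutator I J x = I x ** J x - J x ** I x"

definition angle_fun :: "endo_field \<Rightarrow> endo_field \<Rightarrow> pt \<Rightarrow> real" where
  "angle_fun I J x = trace (I x ** J x) / 4"

definition nondegenerate :: "pt set \<Rightarrow> endo_field \<Rightarrow> endo_field \<Rightarrow> endo_field \<Rightarrow> bool" where
  "nondegenerate U g I J \<longleftrightarrow> (\<forall>x\<in>U. invertible (matrix_inv (g x) ** commutator I J x))"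

end

theory Submission
  imports Defs
begin

(* At a point, differentiating the compatibility g(KX, KY) = g(X, Y) and the vanishing of the
   Nijenhuis tensor expresses the derivative of each complex structure K through the derivative
   of g and the torsion d^c omega_K.  Now dp(v) = tr((D_v I) J + I (D_v J)) / 4; evaluated in a
   g-orthonormal frame adapted to I the metric terms cancel, and since d^c omega_J = - d^c omega_I
   is determined by the Lee form, dp(v) = theta([I,J] v) / 2.  Writing J in such a frame also
   shows that in dimension four [I,J]^2 = 4 (p^2 - 1) as soon as [I,J] is invertible (J then
   induces the same orientation as I); applying dp to [I,J] X gives the formula. *)

lemma matrix_vector_mult_uminus_left: "(- A) *v x = - (A *v x)"
  for A :: "'a::ring_1^'n^'m"
  by (simp add: vec_eq_iff matrix_vector_mult_def sum_negf)

lemma matrix_vector_mult_uminus_right: "A *v (- x) = - (A *v x)"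
  for A :: "'a::ring_1^'n^'m"
  by (simp add: vec_eq_iff matrix_vector_mult_def sum_negf)

lemma matrix_mul_uminus_left: "(- A) ** B = - (A ** B)"
  for A :: "'a::ring_1^'n^'m" and B :: "'a^'k^'n"
  by (simp add: vec_eq_iff matrix_matrix_mult_def sum_negf)

lemma matrix_mul_uminus_right: "A ** (- B) = - (A ** B)"
  for A :: "'a::ring_1^'n^'m" and B :: "'a^'k^'n"
  by (simp add: vec_eq_iff matrix_matrix_mult_def sum_negf)

lemma matrix_add_rdistrib: "(A + B) ** C = A ** C + B ** C"
  for A B :: "'a::semiring_1^'n^'m" and C :: "'a^'k^'n"
  by (simp add: vec_eq_iff matrix_matrix_mult_def sum.distrib algebra_simps)

lemma trace_scaleR: "trace (c *\<^sub>R A) = c * trace A"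
  for A :: "real^'n^'n"
  by (simp add: trace_def sum_distrib_left)

lemma invertible_mult_right_factor:
  fixes A B :: "real^'n^'n"
  assumes "invertible (A ** B)"
  shows "invertible B"
  using assms by (simp add: invertible_det_nz det_mul)

lemma invertible_square_apply_eq_0:
  fixes C :: "real^'n^'n"
  assumes "invertible C" and "C *v (C *v v) = 0"
  shows "v = 0"
proof -
  have "inj ((*v) (C ** C))"
    using assms(1) by (intro inj_matrix_vector_mult invertible_mult)
  moreover have "(C ** C) *v v = (C ** C) *v 0"
    using assms(2) by (simp add: matrix_vector_mul_assoc)
  ultimately show ?thesis
    by (rule injD)
qed

lemma symmetric_matrix_inner_commute:
  fixes g :: "real^'n^'n"
  assumes "transpose g = g"
  shows "X \<bullet> (g *v Y) = Y \<bullet> (g *v X)"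
  by (metis assms dot_lmul_matrix inner_commute transpose_matrix_vector)

lemma bounded_bilinear_matrix_vector_mult: "bounded_bilinear (\<lambda>(A::real^'n^'m) (v::real^'n). A *v v)"
  by (simp add: bilinear_conv_bounded_bilinear[symmetric] bilinear_def
      matrix_vector_right_distrib matrix_vector_mult_add_rdistrib matrix_vector_mult_scaleR
      scaleR_matrix_vector_assoc linearI)

lemma bounded_bilinear_matrix_mult: "bounded_bilinear (\<lambda>(A::real^'n^'m) (B::real^'k^'n). A ** B)"
  by (simp add: bilinear_conv_bounded_bilinear[symmetric] bilinear_def
      matrix_add_ldistrib matrix_add_rdistrib scalar_matrix_assoc matrix_scalar_ac linearI)

lemma bounded_linear_trace: "bounded_linear (trace :: real^'n^'n \<Rightarrow> real)"
  by (simp add: linear_conv_bounded_linear[symmetric] linearI trace_add trace_scaleR)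

lemma ex_not_in_span2: "\<exists>w::real^4. w \<notin> span {a, b}"
proof (rule ccontr)
  assume "\<not> ?thesis"
  then have "dim (UNIV :: (real^4) set) = dim {a, b}"
    by (metis UNIV_I dim_span subsetI subset_antisym)
  also have "\<dots> \<le> 2"
    by (rule order_trans[OF dim_le_card']) (auto simp: card_insert_if)
  finally show False by simp
qed

section \<open>Orthonormal frames\<close>

definition orthonormal_frame :: "real^4^4 \<Rightarrow> real^4 \<Rightarrow> real^4 \<Rightarrow> real^4 \<Rightarrow> real^4 \<Rightarrow> bool" where
  "orthonormal_frame g f1 f2 f3 f4 \<longleftrightarrow>
     (let f = [f1, f2, f3, f4] in \<forall>i<4. \<forall>j<4. f ! i \<bullet> (g *v f ! j) = (if i = j then 1 else 0))"

lemma orthonormal_frameD: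
  assumes "orthonormal_frame g f1 f2 f3 f4"
  shows "f1 \<bullet> (g *v f1) = 1" "f1 \<bullet> (g *v f2) = 0" "f1 \<bullet> (g *v f3) = 0" "f1 \<bullet> (g *v f4) = 0"
    "f2 \<bullet> (g *v f1) = 0" "f2 \<bullet> (g *v f2) = 1" "f2 \<bullet> (g *v f3) = 0" "f2 \<bullet> (g *v f4) = 0"
    "f3 \<bullet> (g *v f1) = 0" "f3 \<bullet> (g *v f2) = 0" "f3 \<bullet> (g *v f3) = 1" "f3 \<bullet> (g *v f4) = 0"
    "f4 \<bullet> (g *v f1) = 0" "f4 \<bullet> (g *v f2) = 0" "f4 \<bullet> (g *v f3) = 0" "f4 \<bullet> (g *v f4) = 1"
  using assms by (simp_all add: orthonormal_frame_def Let_def numeral_eq_Suc All_less_Suc2)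

lemma orthonormal_frameI:
  assumes "f1 \<bullet> (g *v f1) = 1" "f1 \<bullet> (g *v f2) = 0" "f1 \<bullet> (g *v f3) = 0" "f1 \<bullet> (g *v f4) = 0"
    "f2 \<bullet> (g *v f1) = 0" "f2 \<bullet> (g *v f2) = 1" "f2 \<bullet> (g *v f3) = 0" "f2 \<bullet> (g *v f4) = 0"
    "f3 \<bullet> (g *v f1) = 0" "f3 \<bullet> (g *v f2) = 0" "f3 \<bullet> (g *v f3) = 1" "f3 \<bullet> (g *v f4) = 0"
    "f4 \<bullet> (g *v f1) = 0" "f4 \<bullet> (g *v f2) = 0" "f4 \<bullet> (g *v f3) = 0" "f4 \<bullet> (g *v f4) = 1"
  shows "orthonormal_frame g f1 f2 f3 f4"
  using assms by (simp add: orthonormal_frame_def Let_def numeral_eq_Suc All_less_Suc2)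

lemma orthonormal_frame_matrix:
  assumes "orthonormal_frame g f1 f2 f3 f4"
  obtains Q :: "real^4^4"
  where "Q $ 1 = f1" "Q $ 2 = f2" "Q $ 3 = f3" "Q $ 4 = f4"
    and "\<And>i. (Q ** g) $ i = Q $ i v* g" and "transpose Q ** (Q ** g) = mat 1"
proof
  define Q :: "real^4^4"
    where "Q = (\<chi> i. if i = 1 then f1 else if i = 2 then f2 else if i = 3 then f3 else f4)"
  show Q: "Q $ 1 = f1" "Q $ 2 = f2" "Q $ 3 = f3" "Q $ 4 = f4"
    by (simp_all add: Q_def)
  show row: "(Q ** g) $ i = Q $ i v* g" for i
    by (simp add: vec_eq_iff matrix_matrix_mult_def vector_matrix_mult_def mult.commute)
  have "((Q ** g) ** transpose Q) $ i $ j = Q $ i \<bullet> (g *v Q $ j)" for i j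
  proof -
    have "((Q ** g) ** transpose Q) $ i $ j = (Q ** g) $ i \<bullet> Q $ j"
      by (simp add: matrix_matrix_mult_def inner_vec_def transpose_def)
    then show ?thesis
      by (simp add: row dot_lmul_matrix)
  qed
  then have "(Q ** g) ** transpose Q = mat 1"
    using orthonormal_frameD[OF assms] by (simp add: vec_eq_iff forall_4 Q mat_def)
  then show "transpose Q ** (Q ** g) = mat 1"
    by (simp add: matrix_left_right_inverse)
qed

lemma orthonormal_frame_expansion:
  assumes "orthonormal_frame g f1 f2 f3 f4"
  shows "x = (f1 \<bullet> (g *v x)) *\<^sub>R f1 + (f2 \<bullet> (g *v x)) *\<^sub>R f2 + (f3 \<bullet> (g *v x)) *\<^sub>R f3
             + (f4 \<bullet> (g *v x)) *\<^sub>R f4"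
proof -
  obtain Q :: "real^4^4" where Q: "Q $ 1 = f1" "Q $ 2 = f2" "Q $ 3 = f3" "Q $ 4 = f4"
    and row: "\<And>i. (Q ** g) $ i = Q $ i v* g" and inv: "transpose Q ** (Q ** g) = mat 1"
    using orthonormal_frame_matrix[OF assms] by blast
  have coeff: "((Q ** g) *v x) $ i = Q $ i \<bullet> (g *v x)" for i
    by (simp add: matrix_vector_mul_component row dot_lmul_matrix)
  have "x = transpose Q *v ((Q ** g) *v x)"
    by (simp add: matrix_vector_mul_assoc inv)
  also have "\<dots> = (\<Sum>i\<in>UNIV. ((Q ** g) *v x) $ i *\<^sub>R Q $ i)"
    by (simp add: vec_eq_iff matrix_vector_mult_def transpose_def mult.commute)
  finally show ?thesis
    by (simp add: sum_4 Q coeff)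
qed

lemma orthonormal_frame_trace:
  assumes "orthonormal_frame g f1 f2 f3 f4"
  shows "trace M = f1 \<bullet> (g *v (M *v f1)) + f2 \<bullet> (g *v (M *v f2)) + f3 \<bullet> (g *v (M *v f3))
                   + f4 \<bullet> (g *v (M *v f4))"
proof -
  obtain Q :: "real^4^4" where Q: "Q $ 1 = f1" "Q $ 2 = f2" "Q $ 3 = f3" "Q $ 4 = f4"
    and row: "\<And>i. (Q ** g) $ i = Q $ i v* g" and inv: "transpose Q ** (Q ** g) = mat 1"
    using orthonormal_frame_matrix[OF assms] by blast
  have diag: "((Q ** g) ** (M ** transpose Q)) $ i $ i = Q $ i \<bullet> (g *v (M *v Q $ i))" for i
  proof -
    have "((Q ** g) ** (M ** transpose Q)) $ i $ i = (Q ** g) $ i \<bullet> (M *v Q $ i)"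
      by (simp add: matrix_matrix_mult_def matrix_vector_mult_def inner_vec_def transpose_def)
    then show ?thesis
      by (simp add: row dot_lmul_matrix)
  qed
  have "trace M = trace ((Q ** g) ** (M ** transpose Q))"
    by (metis inv matrix_mul_assoc matrix_mul_rid trace_mul_sym)
  then show ?thesis
    by (simp add: trace_def diag sum_4 Q)
qed

lemma orthonormal_frame_span:
  assumes "orthonormal_frame g f1 f2 f3 f4"
  shows "v \<in> span {f1, f2, f3, f4}"
proof -
  have "(f1 \<bullet> (g *v v)) *\<^sub>R f1 + (f2 \<bullet> (g *v v)) *\<^sub>R f2 + (f3 \<bullet> (g *v v)) *\<^sub>R f3
          + (f4 \<bullet> (g *v v)) *\<^sub>R f4 \<in> span {f1, f2, f3, f4}"
    by (intro span_add span_scale) (simp_all add: span_base)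
  then show ?thesis
    using orthonormal_frame_expansion[OF assms, of v] by simp
qed

definition adapted_frame ::
    "real^4^4 \<Rightarrow> real^4^4 \<Rightarrow> real^4 \<Rightarrow> real^4 \<Rightarrow> real^4 \<Rightarrow> real^4 \<Rightarrow> bool" where
  "adapted_frame g K f1 f2 f3 f4 \<longleftrightarrow> orthonormal_frame g f1 f2 f3 f4 \<and>
     K *v f1 = f2 \<and> K *v f2 = - f1 \<and> K *v f3 = f4 \<and> K *v f4 = - f3"

section \<open>Hermitian structures at a point\<close>

locale hermitian_point =
  fixes g K :: "real^4^4"
  assumes metric_sym: "transpose g = g"
    and metric_pos: "\<And>X. X \<noteq> 0 \<Longrightarrow> X \<bullet> (g *v X) > 0"
    and cs_square: "K ** K = - mat 1"
    and cs_isometry: "\<And>X Y. (K *v X) \<bullet> (g *v (K *v Y)) = X \<bullet> (g *v Y)"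
begin

lemma metric_commute: "X \<bullet> (g *v Y) = Y \<bullet> (g *v X)"
  by (rule symmetric_matrix_inner_commute[OF metric_sym])

lemma cs_cs_apply: "K *v (K *v X) = - X"
  by (simp add: matrix_vector_mul_assoc cs_square matrix_vector_mult_uminus_left)

lemma cs_skew: "X \<bullet> (g *v (K *v Y)) = - ((K *v X) \<bullet> (g *v Y))"
  using cs_isometry[of X "K *v Y"] by (simp add: cs_cs_apply matrix_vector_mult_uminus_right)

lemma cs_skew': "X \<bullet> (g *v (K *v Y)) = - (Y \<bullet> (g *v (K *v X)))"
  using cs_skew[of X Y] metric_commute[of "K *v X" Y] by simp

lemma cs_skew_self: "X \<bullet> (g *v (K *v X)) = 0"
  using cs_skew'[of X X] by simp

lemma normalized_unit:
  assumes "e \<noteq> 0"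
  shows "((1 / sqrt (e \<bullet> (g *v e))) *\<^sub>R e) \<bullet> (g *v ((1 / sqrt (e \<bullet> (g *v e))) *\<^sub>R e)) = 1"
proof -
  have "e \<bullet> (g *v e) > 0"
    using metric_pos assms by blast
  then show ?thesis
    by (simp add: matrix_vector_mult_scaleR power2_eq_square[symmetric])
qed

lemma adapted_frame_exists: "\<exists>f1 f2 f3 f4. adapted_frame g K f1 f2 f3 f4"
proof -
  define f1 where "f1 = (1 / sqrt (axis 1 1 \<bullet> (g *v axis 1 1))) *\<^sub>R (axis 1 1 :: real^4)"
  have f11: "f1 \<bullet> (g *v f1) = 1"
    unfolding f1_def by (rule normalized_unit) (simp add: axis_eq_0_iff)
  define f2 where "f2 = K *v f1"
  have f12: "f1 \<bullet> (g *v f2) = 0" and f22: "f2 \<bullet> (g *v f2) = 1"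
    unfolding f2_def using cs_skew_self cs_isometry f11 by simp_all
  obtain w where w: "w \<notin> span {f1, f2}"
    using ex_not_in_span2 by blast
  define w' where "w' = w - (f1 \<bullet> (g *v w)) *\<^sub>R f1 - (f2 \<bullet> (g *v w)) *\<^sub>R f2"
  have "w' \<noteq> 0"
  proof
    assume "w' = 0"
    then have "w = (f1 \<bullet> (g *v w)) *\<^sub>R f1 + (f2 \<bullet> (g *v w)) *\<^sub>R f2"
      unfolding w'_def by (simp add: algebra_simps)
    also have "\<dots> \<in> span {f1, f2}"
      by (simp add: span_add span_base span_scale)
    finally show False
      using w by blast
  qed
  define f3 where "f3 = (1 / sqrt (w' \<bullet> (g *v w'))) *\<^sub>R w'"
  have f33: "f3 \<bullet> (g *v f3) = 1"
    unfolding f3_def using \<open>w' \<noteq> 0\<close> by (rule normalized_unit)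
  have "f1 \<bullet> (g *v w') = 0" "f2 \<bullet> (g *v w') = 0"
    unfolding w'_def using f11 f12 f22 metric_commute[of f2 f1]
    by (simp_all add: matrix_vector_mult_diff_distrib matrix_vector_mult_scaleR inner_diff_right)
  then have f13: "f1 \<bullet> (g *v f3) = 0" and f23: "f2 \<bullet> (g *v f3) = 0"
    unfolding f3_def by (simp_all add: matrix_vector_mult_scaleR)
  define f4 where "f4 = K *v f3"
  have f34: "f3 \<bullet> (g *v f4) = 0" and f44: "f4 \<bullet> (g *v f4) = 1"
    unfolding f4_def using cs_skew_self cs_isometry f33 by simp_all
  have f14: "f1 \<bullet> (g *v f4) = 0"
    unfolding f4_def using cs_skew[of f1 f3] f23 f2_def by simp
  have f24: "f2 \<bullet> (g *v f4) = 0"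
    unfolding f4_def f2_def using cs_isometry f13 by simp
  have "orthonormal_frame g f1 f2 f3 f4"
    by (rule orthonormal_frameI) (use f11 f12 f13 f14 f22 f23 f24 f33 f34 f44 metric_commute in metis)+
  then have "adapted_frame g K f1 f2 f3 f4"
    by (simp add: adapted_frame_def f2_def f4_def cs_cs_apply)
  then show ?thesis
    by blast
qed

end

locale bihermitian_point = I: hermitian_point g I + J: hermitian_point g J for g I J :: "real^4^4"
begin

definition J_entry :: "real^4 \<Rightarrow> real^4 \<Rightarrow> real" where
  "J_entry p q = p \<bullet> (g *v (J *v q))"

lemma J_entry_antisym: "J_entry p q = - J_entry q p"
  unfolding J_entry_def by (rule J.cs_skew')

lemma commutator_apply: "(I ** J - J ** I) *v X = I *v (J *v X) - J *v (I *v X)"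
  by (simp add: matrix_vector_mult_diff_rdistrib matrix_vector_mul_assoc)

end

locale bihermitian_frame = bihermitian_point +
  fixes f1 f2 f3 f4 :: "real^4"
  assumes adapted: "adapted_frame g I f1 f2 f3 f4"
begin

lemma frame: "orthonormal_frame g f1 f2 f3 f4"
  using adapted by (simp add: adapted_frame_def)

lemmas frame_inner = orthonormal_frameD[OF frame]

lemma I_frame: "I *v f1 = f2" "I *v f2 = - f1" "I *v f3 = f4" "I *v f4 = - f3"
  using adapted by (simp_all add: adapted_frame_def)

lemma J_entry_diag: "J_entry f1 f1 = 0" "J_entry f2 f2 = 0" "J_entry f3 f3 = 0" "J_entry f4 f4 = 0"
  using J_entry_antisym by (metis add.inverse_unique add_cancel_right_right neg_equal_zero)+

lemma J_entry_swap:
  "J_entry f2 f1 = - J_entry f1 f2" "J_entry f3 f1 = - J_entry f1 f3" "J_entry f4 f1 = - J_entry f1 f4"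
  "J_entry f3 f2 = - J_entry f2 f3" "J_entry f4 f2 = - J_entry f2 f4" "J_entry f4 f3 = - J_entry f3 f4"
  using J_entry_antisym by blast+

lemma J_frame:
  "J *v f1 = J_entry f1 f1 *\<^sub>R f1 + J_entry f2 f1 *\<^sub>R f2 + J_entry f3 f1 *\<^sub>R f3 + J_entry f4 f1 *\<^sub>R f4"
  "J *v f2 = J_entry f1 f2 *\<^sub>R f1 + J_entry f2 f2 *\<^sub>R f2 + J_entry f3 f2 *\<^sub>R f3 + J_entry f4 f2 *\<^sub>R f4"
  "J *v f3 = J_entry f1 f3 *\<^sub>R f1 + J_entry f2 f3 *\<^sub>R f2 + J_entry f3 f3 *\<^sub>R f3 + J_entry f4 f3 *\<^sub>R f4"
  "J *v f4 = J_entry f1 f4 *\<^sub>R f1 + J_entry f2 f4 *\<^sub>R f2 + J_entry f3 f4 *\<^sub>R f3 + J_entry f4 f4 *\<^sub>R f4"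
  unfolding J_entry_def by (rule orthonormal_frame_expansion[OF frame])+

lemmas frame_simps = J_frame J_entry_diag J_entry_swap I_frame frame_inner
  matrix_vector_right_distrib matrix_vector_mult_scaleR matrix_vector_mult_uminus_right
  inner_add_right inner_scaleR_right inner_minus_right

lemma J_square_frame:
  "J_entry f1 f2 ^ 2 + J_entry f1 f3 ^ 2 + J_entry f1 f4 ^ 2 = 1"
  "(J_entry f1 f3 - J_entry f2 f4) * (J_entry f1 f2 - J_entry f3 f4) = 0"
  "(J_entry f1 f3 - J_entry f2 f4) * (J_entry f1 f3 + J_entry f2 f4) = 0"
  "(J_entry f1 f3 - J_entry f2 f4) * (J_entry f1 f4 - J_entry f2 f3) = 0"
  "(J_entry f1 f4 + J_entry f2 f3) * (J_entry f1 f2 - J_entry f3 f4) = 0"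
  "(J_entry f1 f4 + J_entry f2 f3) * (J_entry f1 f3 + J_entry f2 f4) = 0"
  "(J_entry f1 f4 + J_entry f2 f3) * (J_entry f1 f4 - J_entry f2 f3) = 0"
proof -
  have JJ: "f1 \<bullet> (g *v (J *v (J *v f1))) = - 1" "f2 \<bullet> (g *v (J *v (J *v f2))) = - 1"
     "f3 \<bullet> (g *v (J *v (J *v f3))) = - 1" "f4 \<bullet> (g *v (J *v (J *v f4))) = - 1"
     "f1 \<bullet> (g *v (J *v (J *v f2))) = 0" "f1 \<bullet> (g *v (J *v (J *v f3))) = 0"
     "f1 \<bullet> (g *v (J *v (J *v f4))) = 0" "f2 \<bullet> (g *v (J *v (J *v f3))) = 0"
     "f2 \<bullet> (g *v (J *v (J *v f4))) = 0" "f3 \<bullet> (g *v (J *v (J *v f4))) = 0"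
    by (simp_all add: J.cs_cs_apply matrix_vector_mult_uminus_right frame_inner)
  note rel = JJ[unfolded frame_simps, simplified]
  show "J_entry f1 f2 ^ 2 + J_entry f1 f3 ^ 2 + J_entry f1 f4 ^ 2 = 1"
    using rel(1) by (simp add: power2_eq_square)
  show "(J_entry f1 f3 - J_entry f2 f4) * (J_entry f1 f2 - J_entry f3 f4) = 0"
    "(J_entry f1 f3 - J_entry f2 f4) * (J_entry f1 f3 + J_entry f2 f4) = 0"
    "(J_entry f1 f3 - J_entry f2 f4) * (J_entry f1 f4 - J_entry f2 f3) = 0"
    "(J_entry f1 f4 + J_entry f2 f3) * (J_entry f1 f2 - J_entry f3 f4) = 0"
    "(J_entry f1 f4 + J_entry f2 f3) * (J_entry f1 f3 + J_entry f2 f4) = 0"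
    "(J_entry f1 f4 + J_entry f2 f3) * (J_entry f1 f4 - J_entry f2 f3) = 0"
    using rel by algebra+
qed

lemma trace_IJ_frame: "trace (I ** J) = 2 * J_entry f1 f2 + 2 * J_entry f3 f4"
  by (simp only: orthonormal_frame_trace[OF frame] matrix_vector_mul_assoc[symmetric] frame_simps)

lemma commutator_frame:
  "(I ** J - J ** I) *v f1 = (J_entry f1 f4 + J_entry f2 f3) *\<^sub>R f3 + (J_entry f2 f4 - J_entry f1 f3) *\<^sub>R f4"
  "(I ** J - J ** I) *v f2 = (J_entry f2 f4 - J_entry f1 f3) *\<^sub>R f3 - (J_entry f1 f4 + J_entry f2 f3) *\<^sub>R f4"
  "(I ** J - J ** I) *v f3 = - (J_entry f1 f4 + J_entry f2 f3) *\<^sub>R f1 + (J_entry f1 f3 - J_entry f2 f4) *\<^sub>R f2"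
  "(I ** J - J ** I) *v f4 = (J_entry f1 f3 - J_entry f2 f4) *\<^sub>R f1 + (J_entry f1 f4 + J_entry f2 f3) *\<^sub>R f2"
  by (simp_all only: commutator_apply frame_simps matrix_vector_mult_diff_distrib)
    (simp_all add: algebra_simps)

lemma commutator_square_frame:
  assumes "v \<in> {f1, f2, f3, f4}"
  shows "(I ** J - J ** I) *v ((I ** J - J ** I) *v v)
           = - ((J_entry f1 f4 + J_entry f2 f3)\<^sup>2 + (J_entry f1 f3 - J_entry f2 f4)\<^sup>2) *\<^sub>R v"
proof -
  define C where "C = I ** J - J ** I"
  note C_frame = commutator_frame[folded C_def]
  \<comment> \<open>real^4 is a ring, so the simplifier's numeral simprocs rewrite w + w to w * 2\<close>
  have double: "w * 2 = (2::real) *\<^sub>R w" for w :: "real^4"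
    by (simp add: vec_eq_iff)
  show ?thesis
    using assms unfolding C_def[symmetric]
    by (auto simp: C_frame matrix_vector_right_distrib matrix_vector_mult_diff_distrib
        matrix_vector_mult_scaleR matrix_vector_mult_uminus_right algebra_simps power2_eq_square double)
qed

lemma commutator_square_coeff:
  assumes "(J_entry f1 f4 + J_entry f2 f3)\<^sup>2 + (J_entry f1 f3 - J_entry f2 f4)\<^sup>2 \<noteq> 0"
  shows "(J_entry f1 f4 + J_entry f2 f3)\<^sup>2 + (J_entry f1 f3 - J_entry f2 f4)\<^sup>2
           = 4 * (1 - (trace (I ** J) / 4)\<^sup>2)"
proof -
  have "J_entry f1 f4 + J_entry f2 f3 \<noteq> 0 \<or> J_entry f1 f3 - J_entry f2 f4 \<noteq> 0"
    using assms by auto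
  then have "J_entry f3 f4 = J_entry f1 f2" "J_entry f2 f4 = - J_entry f1 f3" "J_entry f2 f3 = J_entry f1 f4"
    using J_square_frame(2-7) by auto
  then show ?thesis
    using J_square_frame(1) by (simp add: trace_IJ_frame power2_eq_square algebra_simps)
qed

end

lemma (in bihermitian_point) commutator_square:
  assumes "invertible (I ** J - J ** I)"
  shows "(I ** J - J ** I) *v ((I ** J - J ** I) *v X) = (4 * ((trace (I ** J) / 4)\<^sup>2 - 1)) *\<^sub>R X"
proof -
  obtain f1 f2 f3 f4 where "adapted_frame g I f1 f2 f3 f4"
    using I.adapted_frame_exists by blast
  then interpret bihermitian_frame g I J f1 f2 f3 f4
    by unfold_locales
  define C where "C = I ** J - J ** I"
  define \<mu> where "\<mu> = (J_entry f1 f4 + J_entry f2 f3)\<^sup>2 + (J_entry f1 f3 - J_entry f2 f4)\<^sup>2"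
  have C_frame: "C *v (C *v v) = - \<mu> *\<^sub>R v" if "v \<in> {f1, f2, f3, f4}" for v
    using commutator_square_frame[OF that] unfolding C_def \<mu>_def .
  have C_square: "C *v (C *v Y) = - \<mu> *\<^sub>R Y" for Y
  proof (rule linear_eq_on_span[where f = "\<lambda>Y. C *v (C *v Y)" and B = "{f1, f2, f3, f4}"])
    show "linear (\<lambda>Y. C *v (C *v Y))"
      by (simp add: matrix_vector_mul_assoc)
    show "linear (\<lambda>Y. - \<mu> *\<^sub>R Y)"
      by (rule linearI) (simp_all add: algebra_simps)
  qed (simp_all add: C_frame orthonormal_frame_span[OF frame])
  have "\<mu> \<noteq> 0"
  proof
    assume "\<mu> = 0"
    then have "f1 = 0"
      using assms C_square[of f1] invertible_square_apply_eq_0 unfolding C_def by simp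
    then show False
      using frame_inner(1) by simp
  qed
  then show ?thesis
    using C_square commutator_square_coeff unfolding C_def \<mu>_def by simp
qed

lemma (in bihermitian_point) angle_square_ne_one:
  assumes "invertible (I ** J - J ** I)"
  shows "(trace (I ** J) / 4)\<^sup>2 \<noteq> 1"
proof
  assume "(trace (I ** J) / 4)\<^sup>2 = 1"
  then have "(I ** J - J ** I) *v ((I ** J - J ** I) *v axis 1 1) = 0"
    using commutator_square[OF assms] by simp
  then have "axis 1 1 = (0 :: real^4)"
    by (rule invertible_square_apply_eq_0[OF assms])
  then show False
    by (simp add: axis_eq_0_iff)
qed

section \<open>Derivatives of matrix fields\<close>

definition mat_deriv :: "('a::real_normed_vector \<Rightarrow> real^'n^'m) \<Rightarrow> 'a \<Rightarrow> 'a \<Rightarrow> real^'n^'m" where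
  "mat_deriv F x = (\<lambda>v. \<chi> i j. frechet_derivative (\<lambda>y. F y $ i $ j) (at x) v)"

lemma has_derivative_mat_deriv:
  assumes "\<And>i j. (\<lambda>y. F y $ i $ j) differentiable (at x)"
  shows "(F has_derivative mat_deriv F x) (at x)"
proof -
  have "((\<lambda>y. F y \<bullet> b) has_derivative (\<lambda>v. mat_deriv F x v \<bullet> b)) (at x)" if "b \<in> Basis" for b
  proof -
    obtain i j where b: "b = axis i (axis j 1)"
      using \<open>b \<in> Basis\<close> unfolding Basis_vec_def by auto
    have "(\<lambda>y. F y \<bullet> b) = (\<lambda>y. F y $ i $ j)"
      and "(\<lambda>v. mat_deriv F x v \<bullet> b) = frechet_derivative (\<lambda>y. F y $ i $ j) (at x)"
      by (simp_all add: b inner_axis mat_deriv_def)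
    then show ?thesis
      using assms frechet_derivative_works by metis
  qed
  then show ?thesis
    using has_derivative_componentwise_within[of F "mat_deriv F x" x UNIV] by simp
qed

lemma smooth_endo_has_derivative:
  assumes "smooth_endo U F" "open U" "x \<in> U"
  shows "(F has_derivative mat_deriv F x) (at x)"
proof (rule has_derivative_mat_deriv)
  fix i j
  have "Ck (Suc 0) U (\<lambda>y. F y $ i $ j)"
    using assms(1) unfolding smooth_endo_def smooth_on_def by blast
  then show "(\<lambda>y. F y $ i $ j) differentiable (at x)"
    using assms(2,3) differentiable_on_eq_differentiable_at by auto
qed

lemma has_derivative_matrix_vector_mult:
  fixes F :: "'a::real_normed_vector \<Rightarrow> real^'n^'m" and w :: "'a \<Rightarrow> real^'n"
  assumes "(F has_derivative F') (at x)" "(w has_derivative w') (at x)"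
  shows "((\<lambda>y. F y *v w y) has_derivative (\<lambda>v. F x *v w' v + F' v *v w x)) (at x)"
  using bounded_bilinear.FDERIV[OF bounded_bilinear_matrix_vector_mult assms] by simp

lemma has_derivative_matrix_vector_mult_const:
  fixes F :: "'a::real_normed_vector \<Rightarrow> real^'n^'m"
  assumes "(F has_derivative F') (at x)"
  shows "((\<lambda>y. F y *v X) has_derivative (\<lambda>v. F' v *v X)) (at x)"
  using has_derivative_matrix_vector_mult[OF assms has_derivative_const[of X]] by simp

lemma has_derivative_matrix_mult:
  fixes F :: "'a::real_normed_vector \<Rightarrow> real^'n^'m" and G :: "'a \<Rightarrow> real^'k^'n"
  assumes "(F has_derivative F') (at x)" "(G has_derivative G') (at x)"
  shows "((\<lambda>y. F y ** G y) has_derivative (\<lambda>v. F x ** G' v + F' v ** G x)) (at x)"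
  using bounded_bilinear.FDERIV[OF bounded_bilinear_matrix_mult assms] by simp

lemma has_derivative_vanishing:
  assumes "(f has_derivative f') (at x)" "open U" "x \<in> U" "\<And>y. y \<in> U \<Longrightarrow> f y = (0::real)"
  shows "f' v = 0"
proof -
  have "((\<lambda>y. 0::real) has_derivative f') (at x)"
    using has_derivative_transform_within_open[OF assms(1-3)] assms(4) by metis
  then have "f' = (\<lambda>v. 0)"
    using has_derivative_unique has_derivative_const by blast
  then show ?thesis
    by simp
qed

lemma dd_angle_fun:
  assumes "(I has_derivative a) (at x)" "(J has_derivative b) (at x)"
  shows "dd (angle_fun I J) x v = trace (a v ** J x + I x ** b v) / 4"
proof -
  have "(angle_fun I J has_derivative (\<lambda>v. trace (I x ** b v + a v ** J x) / 4)) (at x)"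
    unfolding angle_fun_def
    using bounded_linear.has_derivative[OF bounded_linear_divide[of 4]
        bounded_linear.has_derivative[OF bounded_linear_trace has_derivative_matrix_mult[OF assms]]]
    by simp
  then show ?thesis
    by (simp add: dd_def frechet_derivative_at[symmetric] add.commute)
qed

lemma matrix_inv_complex_structure:
  fixes K :: "'a::comm_ring_1^'n^'n"
  assumes "K ** K = - mat 1"
  shows "matrix_inv K = - K"
proof -
  have inv: "K ** (- K) = mat 1 \<and> (- K) ** K = mat 1"
    using assms by (simp add: matrix_mul_uminus_left matrix_mul_uminus_right)
  then have left_inv: "matrix_inv K ** K = mat 1"
    unfolding matrix_inv_def by (rule someI2) blast
  have "matrix_inv K = matrix_inv K ** (K ** (- K))"
    using inv by simp
  also have "\<dots> = - K"
    by (simp add: matrix_mul_assoc left_inv)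
  finally show ?thesis .
qed

section \<open>First-order jets of generalized K\<a>hler structures\<close>

text \<open>First-order data at a point: h and c stand for the derivatives of g and of a complex
  structure K there, so that deriv_metric h X Y Z is (D_X g)(Y, Z) and deriv_cs g c X Y Z
  is g(Z, (D_X K) Y).\<close>

definition deriv_metric :: "(real^4 \<Rightarrow> real^4^4) \<Rightarrow> real^4 \<Rightarrow> real^4 \<Rightarrow> real^4 \<Rightarrow> real" where
  "deriv_metric h X Y Z = Y \<bullet> (h X *v Z)"

definition deriv_cs ::
    "real^4^4 \<Rightarrow> (real^4 \<Rightarrow> real^4^4) \<Rightarrow> real^4 \<Rightarrow> real^4 \<Rightarrow> real^4 \<Rightarrow> real" where
  "deriv_cs g c X Y Z = Z \<bullet> (g *v (c X *v Y))"

definition christoffel :: "(real^4 \<Rightarrow> real^4^4) \<Rightarrow> real^4 \<Rightarrow> real^4 \<Rightarrow> real^4 \<Rightarrow> real" where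
  "christoffel h X Y Z = (deriv_metric h X Z Y + deriv_metric h Y Z X - deriv_metric h Z X Y) / 2"

definition d_fund_form :: "real^4^4 \<Rightarrow> real^4^4 \<Rightarrow> (real^4 \<Rightarrow> real^4^4) \<Rightarrow> (real^4 \<Rightarrow> real^4^4)
    \<Rightarrow> real^4 \<Rightarrow> real^4 \<Rightarrow> real^4 \<Rightarrow> real" where
  "d_fund_form g K h c X Y Z =
     deriv_metric h X Y (K *v Z) + deriv_cs g c X Z Y + deriv_metric h Y Z (K *v X) + deriv_cs g c Y X Z
     + deriv_metric h Z X (K *v Y) + deriv_cs g c Z Y X"

definition dc_fund_form :: "real^4^4 \<Rightarrow> real^4^4 \<Rightarrow> (real^4 \<Rightarrow> real^4^4) \<Rightarrow> (real^4 \<Rightarrow> real^4^4)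
    \<Rightarrow> real^4 \<Rightarrow> real^4 \<Rightarrow> real^4 \<Rightarrow> real" where
  "dc_fund_form g K h c X Y Z = d_fund_form g K h c (- (K *v X)) (- (K *v Y)) (- (K *v Z))"

lemma has_derivative_fund_form:
  assumes "(g has_derivative h) (at x)" "(K has_derivative c) (at x)"
  shows "((\<lambda>y. fund_form g K y Y Z) has_derivative
           (\<lambda>v. Y \<bullet> (g x *v (c v *v Z) + h v *v (K x *v Z)))) (at x)"
  unfolding fund_form_def gf_def
  using has_derivative_inner[OF has_derivative_const[of Y]
      has_derivative_matrix_vector_mult[OF assms(1) has_derivative_matrix_vector_mult_const[OF assms(2)]]]
  by simp

lemma dd_fund_form:
  assumes "(g has_derivative h) (at x)" "(K has_derivative c) (at x)"
  shows "dd (\<lambda>y. fund_form g K y Y Z) x v = deriv_cs (g x) c v Z Y + deriv_metric h v Y (K x *v Z)"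
proof -
  have "frechet_derivative (\<lambda>y. fund_form g K y Y Z) (at x)
          = (\<lambda>v. Y \<bullet> (g x *v (c v *v Z) + h v *v (K x *v Z)))"
    by (rule frechet_derivative_at[OF has_derivative_fund_form[OF assms], symmetric])
  then show ?thesis
    by (simp add: dd_def deriv_cs_def deriv_metric_def inner_add_right)
qed

lemma d2_fund_form:
  assumes "(g has_derivative h) (at x)" "(K has_derivative c) (at x)"
  shows "d2 (fund_form g K) x X Y Z = d_fund_form (g x) (K x) h c X Y Z"
  unfolding d2_def dd_fund_form[OF assms] d_fund_form_def by simp

lemma dc_fund_form:
  assumes dg: "(g has_derivative h) (at x)" and dK: "(K has_derivative c) (at x)"
    and "open U" "x \<in> U" and "K x ** K x = - mat 1"
    and herm: "\<And>y X Y. y \<in> U \<Longrightarrow> (K y *v X) \<bullet> (g y *v (K y *v Y)) = X \<bullet> (g y *v Y)"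
  shows "dc K (fund_form g K) x X Y Z = dc_fund_form (g x) (K x) h c X Y Z"
proof -
  have "frechet_derivative (\<lambda>y. act2 K (fund_form g K) y B C) (at x)
          = frechet_derivative (\<lambda>y. fund_form g K y B C) (at x)" for B C
  proof (rule sym, rule frechet_derivative_transform_within_open)
    show "(\<lambda>y. fund_form g K y B C) differentiable at x"
      using has_derivative_fund_form[OF dg dK] differentiableI by blast
    show "fund_form g K y B C = act2 K (fund_form g K) y B C" if "y \<in> U" for y
      unfolding act2_def fund_form_def gf_def using herm[OF that, of B "K y *v C"] by simp
  qed fact+
  then have "dc K (fund_form g K) x X Y Z
               = d2 (fund_form g K) x (- (K x *v X)) (- (K x *v Y)) (- (K x *v Z))"
    unfolding dc_def act3_def matrix_inv_complex_structure[OF assms(5)] d2_def dd_def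
    by (simp add: matrix_vector_mult_uminus_left)
  then show ?thesis
    by (simp add: d2_fund_form[OF dg dK] dc_fund_form_def)
qed

lemma deriv_metric_commute:
  assumes dg: "(g has_derivative h) (at x)" and "open U" "x \<in> U"
    and sym: "\<And>y. y \<in> U \<Longrightarrow> transpose (g y) = g y"
  shows "deriv_metric h v Y Z = deriv_metric h v Z Y"
proof -
  have "((\<lambda>y. Y \<bullet> (g y *v Z) - Z \<bullet> (g y *v Y)) has_derivative
          (\<lambda>v. Y \<bullet> (h v *v Z) - Z \<bullet> (h v *v Y))) (at x)"
    using has_derivative_diff[OF
        has_derivative_inner[OF has_derivative_const[of Y] has_derivative_matrix_vector_mult_const[OF dg]]
        has_derivative_inner[OF has_derivative_const[of Z] has_derivative_matrix_vector_mult_const[OF dg]]]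
    by simp
  then have "Y \<bullet> (h v *v Z) - Z \<bullet> (h v *v Y) = 0"
    by (rule has_derivative_vanishing[OF _ assms(2,3)])
      (simp add: symmetric_matrix_inner_commute[OF sym])
  then show ?thesis
    by (simp add: deriv_metric_def)
qed

lemma deriv_hermitian:
  assumes dg: "(g has_derivative h) (at x)" and dK: "(K has_derivative c) (at x)"
    and "open U" "x \<in> U" and "transpose (g x) = g x"
    and herm: "\<And>y X Y. y \<in> U \<Longrightarrow> (K y *v X) \<bullet> (g y *v (K y *v Y)) = X \<bullet> (g y *v Y)"
  shows "deriv_cs (g x) c A B (K x *v C) + deriv_metric h A (K x *v B) (K x *v C)
           + deriv_cs (g x) c A C (K x *v B) - deriv_metric h A B C = 0"
proof -
  have "((\<lambda>y. (K y *v B) \<bullet> (g y *v (K y *v C)) - B \<bullet> (g y *v C)) has_derivative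
          (\<lambda>v. (K x *v B) \<bullet> (g x *v (c v *v C) + h v *v (K x *v C))
               + (c v *v B) \<bullet> (g x *v (K x *v C)) - B \<bullet> (h v *v C))) (at x)"
    using has_derivative_diff[OF
        has_derivative_inner[OF has_derivative_matrix_vector_mult_const[OF dK, of B]
          has_derivative_matrix_vector_mult[OF dg has_derivative_matrix_vector_mult_const[OF dK, of C]]]
        has_derivative_inner[OF has_derivative_const[of B] has_derivative_matrix_vector_mult_const[OF dg, of C]]]
    by simp
  then have "(K x *v B) \<bullet> (g x *v (c A *v C) + h A *v (K x *v C))
               + (c A *v B) \<bullet> (g x *v (K x *v C)) - B \<bullet> (h A *v C) = 0"
    by (rule has_derivative_vanishing[OF _ assms(3,4)]) (simp add: herm)
  then show ?thesis
    using symmetric_matrix_inner_commute[OF assms(5), of "c A *v B" "K x *v C"]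
    by (simp add: deriv_cs_def deriv_metric_def inner_add_right)
qed

lemma deriv_nijenhuis:
  assumes dK: "(K has_derivative c) (at x)"
    and nij: "\<And>X Y. nijenhuis K (\<lambda>_. X) (\<lambda>_. Y) x = 0"
    and "hermitian_point G (K x)"
  shows "deriv_cs G c (K x *v A) B C - deriv_cs G c (K x *v B) A C
           - deriv_cs G c B A (K x *v C) + deriv_cs G c A B (K x *v C) = 0"
proof -
  interpret hermitian_point G "K x" by fact
  have "frechet_derivative (\<lambda>y. K y *v W) (at x) = (\<lambda>v. c v *v W)" for W
    by (rule frechet_derivative_at[OF has_derivative_matrix_vector_mult_const[OF dK], symmetric])
  then have "c (K x *v A) *v B - c (K x *v B) *v A + K x *v (c B *v A) - K x *v (c A *v B) = 0"
    using nij[of A B]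
    by (simp add: nijenhuis_def lie_bracket_def dd_def matrix_vector_mult_diff_distrib
        matrix_vector_mult_uminus_right)
  then have "C \<bullet> (G *v (c (K x *v A) *v B - c (K x *v B) *v A + K x *v (c B *v A)
               - K x *v (c A *v B))) = 0"
    by simp
  then have "C \<bullet> (G *v (c (K x *v A) *v B)) - C \<bullet> (G *v (c (K x *v B) *v A))
      + C \<bullet> (G *v (K x *v (c B *v A))) - C \<bullet> (G *v (K x *v (c A *v B))) = 0"
    by (simp add: matrix_vector_right_distrib matrix_vector_mult_diff_distrib inner_add_right
        inner_diff_right)
  then show ?thesis
    by (simp add: deriv_cs_def cs_skew)
qed

lemma deriv_metric_uminus:
  assumes "linear h"
  shows "deriv_metric h (- X) Y Z = - deriv_metric h X Y Z"
    "deriv_metric h X (- Y) Z = - deriv_metric h X Y Z"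
    "deriv_metric h X Y (- Z) = - deriv_metric h X Y Z"
  using assms
  by (simp_all add: deriv_metric_def linear_neg matrix_vector_mult_uminus_left matrix_vector_mult_uminus_right)

lemma deriv_cs_uminus:
  assumes "linear c"
  shows "deriv_cs g c (- X) Y Z = - deriv_cs g c X Y Z"
    "deriv_cs g c X (- Y) Z = - deriv_cs g c X Y Z"
    "deriv_cs g c X Y (- Z) = - deriv_cs g c X Y Z"
  using assms
  by (simp_all add: deriv_cs_def linear_neg matrix_vector_mult_uminus_left matrix_vector_mult_uminus_right)

locale hermitian_jet = hermitian_point g K for g K :: "real^4^4" +
  fixes h c :: "real^4 \<Rightarrow> real^4^4"
  assumes linear_metric_deriv: "linear h"
    and linear_cs_deriv: "linear c"
    and metric_deriv_commute: "\<And>X Y Z. deriv_metric h X Y Z = deriv_metric h X Z Y"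
    and hermitian_deriv: "\<And>A B C. deriv_cs g c A B (K *v C) + deriv_metric h A (K *v B) (K *v C)
                                    + deriv_cs g c A C (K *v B) - deriv_metric h A B C = 0"
    and integrable_deriv: "\<And>A B C. deriv_cs g c (K *v A) B C - deriv_cs g c (K *v B) A C
                                     - deriv_cs g c B A (K *v C) + deriv_cs g c A B (K *v C) = 0"
begin

text \<open>The derivative of K is determined by that of g and by the torsion d^c \<omega>: a coordinate form
  of the classical expression of \<nabla>\<omega> through d\<omega> and the Nijenhuis tensor.\<close>

lemma deriv_cs_eq:
  "deriv_cs g c v Y Z = - christoffel h v (K *v Y) Z - christoffel h v Y (K *v Z)
     + (dc_fund_form g K h c v Z (K *v Y) + dc_fund_form g K h c v (K *v Z) Y) / 2"
proof -
  note signs = deriv_metric_uminus[OF linear_metric_deriv] deriv_cs_uminus[OF linear_cs_deriv]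
    cs_cs_apply matrix_vector_mult_uminus_right minus_minus
  show ?thesis
    using hermitian_deriv[of v Y "K *v Z"] hermitian_deriv[of Y v "K *v Z"]
      hermitian_deriv[of "K *v v" "K *v Y" "K *v Z"] hermitian_deriv[of "K *v Y" v Z]
      integrable_deriv[of v "K *v Z" Y] integrable_deriv[of v Z "K *v Y"]
      integrable_deriv[of "K *v v" Z Y] integrable_deriv[of v Y "K *v Z"]
      metric_deriv_commute[of Y "K *v Z" v] metric_deriv_commute[of "K *v Y" Z v]
      metric_deriv_commute[of Z "K *v Y" v] metric_deriv_commute[of "K *v Z" Y v]
      metric_deriv_commute[of v Y "K *v Z"] metric_deriv_commute[of v "K *v Y" Z]
      metric_deriv_commute[of "K *v v" Y Z] metric_deriv_commute[of "K *v v" "K *v Y" "K *v Z"]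
    unfolding christoffel_def dc_fund_form_def d_fund_form_def signs
    by argo
qed

end

lemma hermitian_jet_at:
  assumes "open U" "x \<in> U" "riem_metric U g" "integrable_cs U K" "hermitian U g K"
  shows "hermitian_jet (g x) (K x) (mat_deriv g x) (mat_deriv K x)"
proof -
  have dg: "(g has_derivative mat_deriv g x) (at x)" and sym: "\<And>y. y \<in> U \<Longrightarrow> transpose (g y) = g y"
    using assms(1-3) smooth_endo_has_derivative by (auto simp: riem_metric_def)
  have dK: "(K has_derivative mat_deriv K x) (at x)"
    using assms(1,2,4) smooth_endo_has_derivative by (auto simp: integrable_cs_def)
  have herm: "\<And>y X Y. y \<in> U \<Longrightarrow> (K y *v X) \<bullet> (g y *v (K y *v Y)) = X \<bullet> (g y *v Y)"
    using assms(5) by (simp add: hermitian_def gf_def)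
  have point: "hermitian_point (g x) (K x)"
    using assms(2-5) by unfold_locales (auto simp: riem_metric_def integrable_cs_def hermitian_def gf_def)
  show ?thesis
  proof (intro hermitian_jet.intro hermitian_jet_axioms.intro point)
    show "linear (mat_deriv g x)" "linear (mat_deriv K x)"
      using dg dK by (simp_all add: has_derivative_linear)
    show "deriv_metric (mat_deriv g x) X Y Z = deriv_metric (mat_deriv g x) X Z Y" for X Y Z
      by (rule deriv_metric_commute[OF dg assms(1,2) sym])
    show "deriv_cs (g x) (mat_deriv K x) A B (K x *v C) + deriv_metric (mat_deriv g x) A (K x *v B) (K x *v C)
            + deriv_cs (g x) (mat_deriv K x) A C (K x *v B) - deriv_metric (mat_deriv g x) A B C = 0" for A B C
      by (rule deriv_hermitian[OF dg dK assms(1,2) sym[OF assms(2)] herm])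
    show "deriv_cs (g x) (mat_deriv K x) (K x *v A) B C - deriv_cs (g x) (mat_deriv K x) (K x *v B) A C
            - deriv_cs (g x) (mat_deriv K x) B A (K x *v C) + deriv_cs (g x) (mat_deriv K x) A B (K x *v C) = 0"
      for A B C
      using assms(2,4) by (intro deriv_nijenhuis[OF dK _ point]) (simp add: integrable_cs_def)
  qed
qed

definition lee_torsion :: "real^4^4 \<Rightarrow> real^4^4 \<Rightarrow> real^4 \<Rightarrow> real^4 \<Rightarrow> real^4 \<Rightarrow> real^4 \<Rightarrow> real" where
  "lee_torsion g I \<theta> X Y Z =
     - ((\<theta> \<bullet> (I *v X)) * (Y \<bullet> (g *v (I *v Z))) + (\<theta> \<bullet> (I *v Y)) * (Z \<bullet> (g *v (I *v X)))
        + (\<theta> \<bullet> (I *v Z)) * (X \<bullet> (g *v (I *v Y))))"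

lemma lee_torsion_linear:
  "lee_torsion g I \<theta> (x + y) Y Z = lee_torsion g I \<theta> x Y Z + lee_torsion g I \<theta> y Y Z"
  "lee_torsion g I \<theta> (r *\<^sub>R x) Y Z = r * lee_torsion g I \<theta> x Y Z"
  "lee_torsion g I \<theta> (- x) Y Z = - lee_torsion g I \<theta> x Y Z"
  "lee_torsion g I \<theta> X (x + y) Z = lee_torsion g I \<theta> X x Z + lee_torsion g I \<theta> X y Z"
  "lee_torsion g I \<theta> X (r *\<^sub>R x) Z = r * lee_torsion g I \<theta> X x Z"
  "lee_torsion g I \<theta> X (- x) Z = - lee_torsion g I \<theta> X x Z"
  "lee_torsion g I \<theta> X Y (x + y) = lee_torsion g I \<theta> X Y x + lee_torsion g I \<theta> X Y y"
  "lee_torsion g I \<theta> X Y (r *\<^sub>R x) = r * lee_torsion g I \<theta> X Y x"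
  "lee_torsion g I \<theta> X Y (- x) = - lee_torsion g I \<theta> X Y x"
  by (simp_all add: lee_torsion_def matrix_vector_right_distrib matrix_vector_mult_scaleR
      matrix_vector_mult_uminus_right inner_add_left inner_add_right algebra_simps)

lemma christoffel_linear:
  assumes "linear h"
  shows "christoffel h v (x + y) z = christoffel h v x z + christoffel h v y z"
    "christoffel h v (r *\<^sub>R x) z = r * christoffel h v x z"
    "christoffel h v (- x) z = - christoffel h v x z"
    "christoffel h v z (x + y) = christoffel h v z x + christoffel h v z y"
    "christoffel h v z (r *\<^sub>R x) = r * christoffel h v z x"
    "christoffel h v z (- x) = - christoffel h v z x"
  using assms
  by (simp_all add: christoffel_def deriv_metric_def linear_add linear_scale linear_neg
      matrix_vector_right_distrib matrix_vector_mult_add_rdistrib matrix_vector_mult_scaleR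
      scaleR_matrix_vector_assoc[symmetric] matrix_vector_mult_uminus_left matrix_vector_mult_uminus_right
      inner_add_left inner_add_right field_simps)

locale gen_kahler_jet = I: hermitian_jet g I h a + J: hermitian_jet g J h b
  for g I J :: "real^4^4" and h a b :: "real^4 \<Rightarrow> real^4^4" +
  fixes \<theta> :: "real^4"
  assumes torsion_opposite: "\<And>X Y Z. dc_fund_form g I h a X Y Z = - dc_fund_form g J h b X Y Z"
    and lee_form: "\<And>X Y Z. d_fund_form g I h a X Y Z = (\<theta> \<bullet> X) * (Y \<bullet> (g *v (I *v Z)))
                             + (\<theta> \<bullet> Y) * (Z \<bullet> (g *v (I *v X))) + (\<theta> \<bullet> Z) * (X \<bullet> (g *v (I *v Y)))"

sublocale gen_kahler_jet \<subseteq> bihermitian_point g I J ..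

context gen_kahler_jet
begin

lemma dc_fund_form_I: "dc_fund_form g I h a X Y Z = lee_torsion g I \<theta> X Y Z"
  by (simp add: dc_fund_form_def lee_form lee_torsion_def matrix_vector_mult_uminus_right I.cs_isometry)

lemma dc_fund_form_J: "dc_fund_form g J h b X Y Z = - lee_torsion g I \<theta> X Y Z"
  using torsion_opposite[of X Y Z] by (simp add: dc_fund_form_I)

lemma trace_deriv_frame:
  assumes "orthonormal_frame g f1 f2 f3 f4"
  shows "trace (a v ** J + I ** b v) =
           deriv_cs g a v (J *v f1) f1 + deriv_cs g a v (J *v f2) f2 + deriv_cs g a v (J *v f3) f3
           + deriv_cs g a v (J *v f4) f4 + deriv_cs g b v (I *v f1) f1 + deriv_cs g b v (I *v f2) f2
           + deriv_cs g b v (I *v f3) f3 + deriv_cs g b v (I *v f4) f4"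
proof -
  have "trace (a v ** J + I ** b v) = trace (a v ** J) + trace (b v ** I)"
    by (simp only: trace_add trace_mul_sym[of I "b v"])
  then show ?thesis
    by (simp only: orthonormal_frame_trace[OF assms] matrix_vector_mul_assoc[symmetric] deriv_cs_def
        add.assoc)
qed

lemma trace_deriv_eq_lee_frame:
  assumes "adapted_frame g I f1 f2 f3 f4" and "v \<in> {f1, f2, f3, f4}"
  shows "trace (a v ** J + I ** b v) = 2 * (\<theta> \<bullet> ((I ** J - J ** I) *v v))"
proof -
  interpret bihermitian_frame g I J f1 f2 f3 f4
    using assms(1) by unfold_locales
  note expand = frame_simps christoffel_linear[OF I.linear_metric_deriv] lee_torsion_linear
  \<comment> \<open>after expansion in the frame the Christoffel terms cancel; the torsion terms give \<theta>\<close>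
  show ?thesis
    unfolding trace_deriv_frame[OF frame] I.deriv_cs_eq J.deriv_cs_eq dc_fund_form_I dc_fund_form_J
    using assms(2)
    apply (elim insertE emptyE; hypsubst)
       apply (simp_all only: expand)
       apply (simp_all only: lee_torsion_def commutator_apply expand inner_minus_left
        inner_diff_right matrix_vector_mult_diff_distrib)
       apply (simp_all add: field_simps)
    done
qed

lemma trace_deriv_eq_lee: "trace (a v ** J + I ** b v) = 2 * (\<theta> \<bullet> ((I ** J - J ** I) *v v))"
proof -
  obtain f1 f2 f3 f4 where F: "adapted_frame g I f1 f2 f3 f4"
    using I.adapted_frame_exists by blast
  show ?thesis
  proof (rule linear_eq_on_span[where f = "\<lambda>w. trace (a w ** J + I ** b w)" and B = "{f1, f2, f3, f4}"])
    show "linear (\<lambda>w. trace (a w ** J + I ** b w))"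
      by (rule linearI) (simp_all add: linear_add[OF I.linear_cs_deriv] linear_add[OF J.linear_cs_deriv]
          linear_scale[OF I.linear_cs_deriv] linear_scale[OF J.linear_cs_deriv] matrix_add_rdistrib
          matrix_add_ldistrib scalar_matrix_assoc[symmetric] matrix_scalar_ac trace_add trace_scaleR
          algebra_simps)
    show "linear (\<lambda>w. 2 * (\<theta> \<bullet> ((I ** J - J ** I) *v w)))"
      by (rule linearI) (simp_all add: matrix_vector_right_distrib matrix_vector_mult_scaleR
          inner_add_right)
    show "v \<in> span {f1, f2, f3, f4}"
      using F unfolding adapted_frame_def by (blast intro: orthonormal_frame_span)
  qed (rule trace_deriv_eq_lee_frame[OF F])
qed

end

lemma gen_kahler_jet_at:
  assumes gk: "gen_kahler U g I J" and "x \<in> U"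
    and lee: "\<forall>x\<in>U. \<forall>X Y Z. d2 (fund_form g I) x X Y Z = wedge12 \<theta> (fund_form g I) x X Y Z"
  shows "gen_kahler_jet (g x) (I x) (J x) (mat_deriv g x) (mat_deriv I x) (mat_deriv J x) (\<theta> x)"
proof -
  have U: "open U" "riem_metric U g" "integrable_cs U I" "integrable_cs U J"
    "hermitian U g I" "hermitian U g J"
    and torsion: "\<And>X Y Z. dc I (fund_form g I) x X Y Z = - dc J (fund_form g J) x X Y Z"
    using gk \<open>x \<in> U\<close> unfolding gen_kahler_def Let_def by auto
  have dg: "(g has_derivative mat_deriv g x) (at x)"
    using U(1,2) \<open>x \<in> U\<close> smooth_endo_has_derivative by (auto simp: riem_metric_def)
  have dI: "(I has_derivative mat_deriv I x) (at x)" and dJ: "(J has_derivative mat_deriv J x) (at x)"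
    using U(1,3,4) \<open>x \<in> U\<close> smooth_endo_has_derivative by (auto simp: integrable_cs_def)
  have jet_I: "hermitian_jet (g x) (I x) (mat_deriv g x) (mat_deriv I x)"
    and jet_J: "hermitian_jet (g x) (J x) (mat_deriv g x) (mat_deriv J x)"
    using U \<open>x \<in> U\<close> by (simp_all add: hermitian_jet_at)
  have dc_I: "dc I (fund_form g I) x X Y Z = dc_fund_form (g x) (I x) (mat_deriv g x) (mat_deriv I x) X Y Z"
    and dc_J: "dc J (fund_form g J) x X Y Z = dc_fund_form (g x) (J x) (mat_deriv g x) (mat_deriv J x) X Y Z"
    for X Y Z
    using U \<open>x \<in> U\<close>
    by (auto intro!: dc_fund_form[OF dg dI] dc_fund_form[OF dg dJ]
        simp: integrable_cs_def hermitian_def gf_def)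
  show ?thesis
  proof (intro gen_kahler_jet.intro gen_kahler_jet_axioms.intro jet_I jet_J)
    show "dc_fund_form (g x) (I x) (mat_deriv g x) (mat_deriv I x) X Y Z
            = - dc_fund_form (g x) (J x) (mat_deriv g x) (mat_deriv J x) X Y Z" for X Y Z
      using torsion by (simp add: dc_I dc_J)
    show "d_fund_form (g x) (I x) (mat_deriv g x) (mat_deriv I x) X Y Z
            = (\<theta> x \<bullet> X) * (Y \<bullet> (g x *v (I x *v Z))) + (\<theta> x \<bullet> Y) * (Z \<bullet> (g x *v (I x *v X)))
              + (\<theta> x \<bullet> Z) * (X \<bullet> (g x *v (I x *v Y)))" for X Y Z
      using lee \<open>x \<in> U\<close> d2_fund_form[OF dg dI, of X Y Z]
      by (simp add: wedge12_def fund_form_def gf_def)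
  qed
qed

lemma dd_angle_fun_at:
  assumes "gen_kahler U g I J" "x \<in> U"
  shows "dd (angle_fun I J) x v = trace (mat_deriv I x v ** J x + I x ** mat_deriv J x v) / 4"
  using assms smooth_endo_has_derivative
  by (intro dd_angle_fun) (auto simp: gen_kahler_def integrable_cs_def)

theorem lemma3p11:
  fixes U :: "(real^4) set" and g I J :: "real^4 \<Rightarrow> real^4^4" and \<theta> :: "real^4 \<Rightarrow> real^4"
  assumes "gen_kahler U g I J"
    and "nondegenerate U g I J"
    and "\<forall>x\<in>U. \<forall>X Y Z. d2 (fund_form g I) x X Y Z = wedge12 \<theta> (fund_form g I) x X Y Z"
  shows "\<forall>x\<in>U. \<forall>X. \<theta> x \<bullet> X =
           1 / (2 * ((angle_fun I J x)\<^sup>2 - 1)) * dd (angle_fun I J) x (commutator I J x *v X)"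
proof (intro ballI allI)
  fix x X
  assume "x \<in> U"
  interpret gen_kahler_jet "g x" "I x" "J x" "mat_deriv g x" "mat_deriv I x" "mat_deriv J x" "\<theta> x"
    using assms(1) \<open>x \<in> U\<close> assms(3) by (rule gen_kahler_jet_at)
  define C where "C = I x ** J x - J x ** I x"
  define p where "p = angle_fun I J x"
  have "invertible C"
    using assms(2) \<open>x \<in> U\<close> invertible_mult_right_factor
    by (auto simp: nondegenerate_def commutator_def C_def)
  have C_square: "C *v (C *v Y) = (4 * (p\<^sup>2 - 1)) *\<^sub>R Y" for Y
    using commutator_square \<open>invertible C\<close> by (simp add: C_def p_def angle_fun_def)
  have "p\<^sup>2 \<noteq> 1"
    using angle_square_ne_one \<open>invertible C\<close> by (simp add: C_def p_def angle_fun_def)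
  have "dd (angle_fun I J) x (C *v X) = (\<theta> x \<bullet> (C *v (C *v X))) / 2"
    using dd_angle_fun_at[OF assms(1) \<open>x \<in> U\<close>] trace_deriv_eq_lee by (simp add: C_def)
  also have "\<dots> = 2 * (p\<^sup>2 - 1) * (\<theta> x \<bullet> X)"
    by (simp add: C_square)
  finally show "\<theta> x \<bullet> X = 1 / (2 * ((angle_fun I J x)\<^sup>2 - 1)) * dd (angle_fun I J) x (commutator I J x *v X)"
    using \<open>p\<^sup>2 \<noteq> 1\<close> by (simp add: commutator_def C_def[symmetric] p_def[symmetric] field_simps)
qed

end
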